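(* Let $\mathcal M(\mathcal P,<)$ be a Morse decomposition of an isolated invariant set $S$, let $\{N(I): I\subset\mathcal P\text{ an attracting interval}\}$ be a Morse set filtration for $\mathcal M(\mathcal P,<)$, and let $J\subset I$ be attracting intervals. Then $(N(I),N(J))$ is a filtration pair for $M_{I\setminus J}$.
   Context: Let $X$ be a locally compact metric space, $U\subset X$ open and $f:U\to X$ continuous. A solution through $x$ is a map $\sigma:\mathbb Z\to U$ with $\sigma(0)=x$ and $f(\sigma(n))=\sigma(n+1)$ for all $n$; for $N\subset U$, $\operatorname{Inv} N$ is the set of $x\in N$ admitting a solution through $x$ with all values in $N$. A compact $N\subset U$ is an isolating neighborhood if $\operatorname{Inv} N\subset\operatorname{Int} N$; $S$ is an isolated invariant set if $S=\operatorname{Inv} N$ for some isolating neighborhood $N$. The exit set of $N$ is $N^-=\{x\in N:f(x)\notin\operatorname{Int} N\}$. A filtration pair for an isolated invariant set $S$ is a pair of compact sets $L\subset N$ contained in the interior of the domain of $f$, each the closure of its interior, such that (1) $\operatorname{cl}(N\setminus L)$ is an isolating neighborhood with $\operatorname{Inv}\operatorname{cl}(N\setminus L)=S$; (2) $L$ is a neighborhood of $N^-$ in $N$; (3) $f(L)\cap\operatorname{cl}(N\setminus L)=\emptyset$. $\omega(x)=\bigcap_{K>0}\operatorname{cl}\big(\bigcup_{n>K}\{f^n(x)\}\big)$, $\omega(\sigma)=\omega(\sigma(0))$, $\alpha(\sigma)=\bigcap_{K>0}\operatorname{cl}\big(\bigcup_{n>K}\{\sigma(-n)\}\big)$. For $B,C\subset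 S$, $C(B,C;S)$ is the set of $x\in S\setminus(B\cup C)$ for which there is a solution $\sigma:\mathbb Z\to S$ through $x$ with $\alpha(\sigma)\subset B$ and $\omega(x)\subset C$. Let $\mathcal P$ be a finite set with a partial order $<$ (irreflexive, transitive). $I\subset\mathcal P$ is an interval if $p<r<q$, $p,q\in I$ imply $r\in I$, and an attracting interval if $r<q$, $q\in I$ imply $r\in I$. A collection $\{M_p\subset S:p\in\mathcal P\}$ of pairwise disjoint isolated invariant sets is a Morse decomposition of $S$ if for every $x\in S$ and every solution $\sigma:\mathbb Z\to S$ through $x$, either $\sigma(\mathbb Z)\subset M_p$ for some $p$, or $\omega(\sigma)\subset M_p$ and $\alpha(\sigma)\subset M_q$ for some $p<q$. For an interval $I$, $M_I=\bigcup_{p\in I}M_p\cup\bigcup_{q,r\in I}C(M_q,M_r;S)$. A Morse set filtration for $\mathcal M(\mathcal P,<)$ is a collection of compact sets $\{N(I)\subset X: I\text{ an attracting interval}\}$ such that for all attracting intervals $I,J$: (1) $(N(I),N(\emptyset))$ is a filtration pair for $M_I$; (2) $N(I)\cap N(J)=N(I\cap J)$; (3) $N(I)\cup N(J)=N(I\cup J)$. *)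

theory Defs
  imports "HOL-Analysis.Analysis"
begin

text \<open>Ambient space X is the whole type 'a (a metric space); the map f is
  considered on its domain U only.\<close>

definition is_solution :: "'a set \<Rightarrow> ('a \<Rightarrow> 'a) \<Rightarrow> (int \<Rightarrow> 'a) \<Rightarrow> 'a \<Rightarrow> bool" where
  "is_solution U f \<sigma> x \<longleftrightarrow> \<sigma> 0 = x \<and> (\<forall>n. \<sigma> n \<in> U \<and> f (\<sigma> n) = \<sigma> (n + 1))"

definition Inv :: "'a set \<Rightarrow> ('a \<Rightarrow> 'a) \<Rightarrow> 'a set \<Rightarrow> 'a set" where
  "Inv U f N = {x \<in> N. \<exists>\<sigma>. is_solution U f \<sigma> x \<and> range \<sigma> \<subseteq> N}"

definition isolating_nbhd :: "'a::metric_space set \<Rightarrow> ('a \<Rightarrow> 'a) \<Rightarrow> 'a set \<Rightarrow> bool" where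
  "isolating_nbhd U f N \<longleftrightarrow> compact N \<and> N \<subseteq> U \<and> Inv U f N \<subseteq> interior N"

definition isolated_invariant :: "'a::metric_space set \<Rightarrow> ('a \<Rightarrow> 'a) \<Rightarrow> 'a set \<Rightarrow> bool" where
  "isolated_invariant U f S \<longleftrightarrow> (\<exists>N. isolating_nbhd U f N \<and> S = Inv U f N)"

definition exit_set :: "('a \<Rightarrow> 'a) \<Rightarrow> 'a::metric_space set \<Rightarrow> 'a set" where
  "exit_set f N = {x \<in> N. f x \<notin> interior N}"

definition filtration_pair ::
  "'a::metric_space set \<Rightarrow> ('a \<Rightarrow> 'a) \<Rightarrow> 'a set \<Rightarrow> 'a set \<Rightarrow> 'a set \<Rightarrow> bool" where
  "filtration_pair U f S N L \<longleftrightarrow>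
     compact N \<and> compact L \<and> L \<subseteq> N \<and> N \<subseteq> interior U \<and>
     closure (interior L) = L \<and> closure (interior N) = N \<and>
     isolating_nbhd U f (closure (N - L)) \<and> Inv U f (closure (N - L)) = S \<and>
     (\<exists>V. open V \<and> exit_set f N \<subseteq> V \<and> V \<inter> N \<subseteq> L) \<and>
     f ` L \<inter> closure (N - L) = {}"

definition omega_limit :: "('a \<Rightarrow> 'a) \<Rightarrow> 'a::metric_space \<Rightarrow> 'a set" where
  "omega_limit f x = (\<Inter>K\<in>{0<..}. closure {(f ^^ n) x | n::nat. n > K})"

definition alpha_limit :: "(int \<Rightarrow> 'a::metric_space) \<Rightarrow> 'a set" where
  "alpha_limit \<sigma> = (\<Inter>K\<in>{0<..}. closure {\<sigma> (- int n) | n::nat. n > K})"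

definition connecting :: "'a::metric_space set \<Rightarrow> ('a \<Rightarrow> 'a) \<Rightarrow> 'a set \<Rightarrow> 'a set \<Rightarrow> 'a set \<Rightarrow> 'a set" where
  "connecting U f B C S = {x \<in> S - (B \<union> C). \<exists>\<sigma>. is_solution U f \<sigma> x \<and> range \<sigma> \<subseteq> S
       \<and> alpha_limit \<sigma> \<subseteq> B \<and> omega_limit f x \<subseteq> C}"

definition strict_partial_order_on :: "'p set \<Rightarrow> ('p \<Rightarrow> 'p \<Rightarrow> bool) \<Rightarrow> bool" where
  "strict_partial_order_on P lt \<longleftrightarrow> finite P \<and> (\<forall>p\<in>P. \<not> lt p p) \<and>
     (\<forall>p\<in>P. \<forall>q\<in>P. \<forall>r\<in>P. lt p q \<longrightarrow> lt q r \<longrightarrow> lt p r)"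

definition is_interval :: "'p set \<Rightarrow> ('p \<Rightarrow> 'p \<Rightarrow> bool) \<Rightarrow> 'p set \<Rightarrow> bool" where
  "is_interval P lt I \<longleftrightarrow> I \<subseteq> P \<and>
     (\<forall>p\<in>I. \<forall>q\<in>I. \<forall>r\<in>P. lt p r \<longrightarrow> lt r q \<longrightarrow> r \<in> I)"

definition attracting_interval :: "'p set \<Rightarrow> ('p \<Rightarrow> 'p \<Rightarrow> bool) \<Rightarrow> 'p set \<Rightarrow> bool" where
  "attracting_interval P lt I \<longleftrightarrow> I \<subseteq> P \<and> (\<forall>q\<in>I. \<forall>r\<in>P. lt r q \<longrightarrow> r \<in> I)"

definition morse_decomposition ::
  "'a::metric_space set \<Rightarrow> ('a \<Rightarrow> 'a) \<Rightarrow> 'a set \<Rightarrow> 'p set \<Rightarrow> ('p \<Rightarrow> 'p \<Rightarrow> bool) \<Rightarrow> ('p \<Rightarrow> 'a set) \<Rightarrow> bool" where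
  "morse_decomposition U f S P lt M \<longleftrightarrow>
     strict_partial_order_on P lt \<and>
     (\<forall>p\<in>P. M p \<subseteq> S \<and> isolated_invariant U f (M p)) \<and>
     (\<forall>p\<in>P. \<forall>q\<in>P. p \<noteq> q \<longrightarrow> M p \<inter> M q = {}) \<and>
     (\<forall>x\<in>S. \<forall>\<sigma>. is_solution U f \<sigma> x \<and> range \<sigma> \<subseteq> S \<longrightarrow>
        (\<exists>p\<in>P. range \<sigma> \<subseteq> M p) \<or>
        (\<exists>p\<in>P. \<exists>q\<in>P. lt p q \<and> omega_limit f (\<sigma> 0) \<subseteq> M p \<and> alpha_limit \<sigma> \<subseteq> M q))"

definition morse_set ::
  "'a::metric_space set \<Rightarrow> ('a \<Rightarrow> 'a) \<Rightarrow> 'a set \<Rightarrow> ('p \<Rightarrow> 'a set) \<Rightarrow> 'p set \<Rightarrow> 'a set" where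
  "morse_set U f S M I = (\<Union>p\<in>I. M p) \<union> (\<Union>q\<in>I. \<Union>r\<in>I. connecting U f (M q) (M r) S)"

definition morse_set_filtration ::
  "'a::metric_space set \<Rightarrow> ('a \<Rightarrow> 'a) \<Rightarrow> 'a set \<Rightarrow> 'p set \<Rightarrow> ('p \<Rightarrow> 'p \<Rightarrow> bool) \<Rightarrow> ('p \<Rightarrow> 'a set)
     \<Rightarrow> ('p set \<Rightarrow> 'a set) \<Rightarrow> bool" where
  "morse_set_filtration U f S P lt M N \<longleftrightarrow>
     (\<forall>I J. attracting_interval P lt I \<longrightarrow> attracting_interval P lt J \<longrightarrow>
        compact (N I) \<and>
        filtration_pair U f (morse_set U f S M I) (N I) (N {}) \<and>
        N I \<inter> N J = N (I \<inter> J) \<and> N I \<union> N J = N (I \<union> J))"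

end

theory Submission
  imports Defs
begin

text \<open>Write \<open>K = closure (N I - N J)\<close>; since \<open>N {} \<subseteq> N J \<subseteq> N I\<close>, most axioms of a filtration
  pair for \<open>(N I, N J)\<close> are inherited from the pairs \<open>(N I, N {})\<close> and \<open>(N J, N {})\<close>. Points
  of \<open>N J - N {}\<close> are not exit points of \<open>N J\<close>, so \<open>f\<close> maps them into the interior of
  \<open>N J\<close>, while \<open>f\<close> maps \<open>N {}\<close> off \<open>closure (N I - N {})\<close>; hence \<open>f\<close> maps \<open>N J\<close> off \<open>K\<close>, and
  \<open>Inv K \<subseteq> M\<^sub>I - N J\<close>.

  The content is \<open>Inv K = M\<^bsub>I - J\<^esub>\<close>. A forward orbit in \<open>N J\<close> that never enters \<open>N {}\<close> has its
  \<open>\<omega>\<close>-limit set in \<open>M\<^sub>J\<close>; so a point of \<open>M\<^sub>I\<close> whose \<open>\<omega>\<close>-limit set lies in a Morse set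
  \<open>M r\<close> with \<open>r \<notin> J\<close> is not in \<open>N J\<close>, which puts every solution in \<open>M\<^bsub>I - J\<^esub>\<close> inside \<open>K\<close>.
  Conversely, a solution in \<open>Inv K\<close> either stays in one Morse set or has its \<open>\<alpha>\<close>- and
  \<open>\<omega>\<close>-limit sets in Morse sets \<open>M q\<close>, \<open>M p\<close>; these limit sets are nonempty by compactness and
  lie in \<open>Inv K \<subseteq> M\<^sub>I - N J\<close>, which forces \<open>p, q \<in> I - J\<close>.\<close>

section \<open>Limit sets of sequences\<close>

definition limit_set :: "(nat \<Rightarrow> 'a::metric_space) \<Rightarrow> 'a set" where
  "limit_set s = (\<Inter>K\<in>{0<..}. closure {s n | n. n > K})"

lemma omega_limit_eq_limit_set: "omega_limit f x = limit_set (\<lambda>n. (f ^^ n) x)"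
  by (simp add: omega_limit_def limit_set_def)

lemma alpha_limit_eq_limit_set: "alpha_limit \<sigma> = limit_set (\<lambda>n. \<sigma> (- int n))"
  by (simp add: alpha_limit_def limit_set_def)

lemma mem_limit_set_iff: "z \<in> limit_set s \<longleftrightarrow> (\<forall>K. \<forall>e>0. \<exists>n>K. dist (s n) z < e)"
proof
  assume z: "z \<in> limit_set s"
  show "\<forall>K. \<forall>e>0. \<exists>n>K. dist (s n) z < e"
  proof (intro allI impI)
    fix K :: nat and e :: real
    assume "e > 0"
    moreover have "z \<in> closure {s n | n. n > Suc K}"
      using z unfolding limit_set_def by auto
    ultimately obtain n where "n > Suc K" "dist (s n) z < e"
      unfolding closure_approachable by blast
    then show "\<exists>n>K. dist (s n) z < e" by (auto intro: Suc_lessD)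
  qed
next
  assume "\<forall>K. \<forall>e>0. \<exists>n>K. dist (s n) z < e"
  then have "z \<in> closure {s n | n. n > K}" for K
    unfolding closure_approachable by blast
  then show "z \<in> limit_set s"
    unfolding limit_set_def by blast
qed

lemma mem_limit_set_iff_tendsto:
  "z \<in> limit_set s \<longleftrightarrow> (\<exists>t. filterlim t at_top sequentially \<and> (\<lambda>k. s (t k)) \<longlonglongrightarrow> z)"
proof
  assume "z \<in> limit_set s"
  then have "\<forall>k. \<exists>n>k. dist (s n) z < inverse (Suc k)"
    unfolding mem_limit_set_iff by simp
  then obtain t where t: "\<forall>k. t k > k \<and> dist (s (t k)) z < inverse (Suc k)"
    by (auto dest: choice)
  have "filterlim t at_top sequentially"
    by (rule filterlim_at_top_mono[OF filterlim_ident always_eventually]) (simp add: less_imp_le t)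
  moreover have "(\<lambda>k. dist (s (t k)) z) \<longlonglongrightarrow> 0"
    by (rule Lim_null_comparison[OF always_eventually LIMSEQ_inverse_real_of_nat])
      (use t in \<open>auto intro: less_imp_le\<close>)
  ultimately show "\<exists>t. filterlim t at_top sequentially \<and> (\<lambda>k. s (t k)) \<longlonglongrightarrow> z"
    using tendsto_dist_iff by blast
next
  assume "\<exists>t. filterlim t at_top sequentially \<and> (\<lambda>k. s (t k)) \<longlonglongrightarrow> z"
  then obtain t where t: "filterlim t at_top sequentially" "(\<lambda>k. s (t k)) \<longlonglongrightarrow> z"
    by blast
  show "z \<in> limit_set s" unfolding mem_limit_set_iff
  proof (intro allI impI)
    fix K and e :: real
    assume "e > 0"
    then have "\<forall>\<^sub>F k in sequentially. Suc K \<le> t k \<and> dist (s (t k)) z < e"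
      using t(1) tendstoD[OF t(2)] unfolding filterlim_at_top by (simp add: eventually_conj)
    then obtain k where "Suc K \<le> t k" "dist (s (t k)) z < e"
      unfolding eventually_sequentially by blast
    then show "\<exists>n>K. dist (s n) z < e" by (auto intro: Suc_le_lessD)
  qed
qed

lemma limit_set_shift: "limit_set (\<lambda>n. s (n + m)) = limit_set s"
proof (rule set_eqI, unfold mem_limit_set_iff, intro iffI allI impI)
  fix z K and e :: real
  assume "\<forall>K. \<forall>e>0. \<exists>n>K. dist (s (n + m)) z < e" "e > 0"
  then obtain n where "n > K" "dist (s (n + m)) z < e" by blast
  then show "\<exists>n>K. dist (s n) z < e" by (intro exI[of _ "n + m"]) auto
next
  fix z K and e :: real
  assume "\<forall>K. \<forall>e>0. \<exists>n>K. dist (s n) z < e" "e > 0"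
  then obtain n where "n > K + m" "dist (s n) z < e" by blast
  then show "\<exists>n>K. dist (s (n + m)) z < e" by (intro exI[of _ "n - m"]) auto
qed

lemma limit_set_subset_closed:
  assumes "closed D" "range s \<subseteq> D"
  shows "limit_set s \<subseteq> D"
proof
  fix z
  assume "z \<in> limit_set s"
  then obtain t where "(\<lambda>k. s (t k)) \<longlonglongrightarrow> z"
    unfolding mem_limit_set_iff_tendsto by blast
  then show "z \<in> D"
    by (rule closed_sequentially[OF assms(1), rotated]) (use assms(2) in auto)
qed

lemma limit_set_nonempty:
  assumes "compact C" "range s \<subseteq> C"
  shows "limit_set s \<noteq> {}"
proof -
  obtain l r where "strict_mono r" "(s \<circ> r) \<longlonglongrightarrow> l"
    using seq_compactE[OF compact_imp_seq_compact[OF assms(1)], of s] assms(2) by blast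
  then have "l \<in> limit_set s"
    unfolding mem_limit_set_iff_tendsto comp_def by (auto intro: filterlim_subseq)
  then show ?thesis by blast
qed

text \<open>The index maps \<open>j\<close> below let the same lemmas serve forward orbits (\<open>j = Suc\<close>) and
  backward orbits (\<open>j = (\<lambda>i. i - 1)\<close>).\<close>

lemma image_mem_limit_set:
  assumes "continuous_on U f" "open U" "limit_set s \<subseteq> U"
    and "filterlim j at_top sequentially" "\<forall>\<^sub>F i in sequentially. f (s i) = s (j i)"
    and "z \<in> limit_set s"
  shows "f z \<in> limit_set s"
proof -
  obtain t where t: "filterlim t at_top sequentially" "(\<lambda>k. s (t k)) \<longlonglongrightarrow> z"
    using assms(6) unfolding mem_limit_set_iff_tendsto by blast
  have "isCont f z"
    using assms(1-3,6) by (simp add: continuous_on_eq_continuous_at subset_iff)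
  then have "(\<lambda>k. f (s (t k))) \<longlonglongrightarrow> f z"
    using t(2) by (rule isCont_tendsto_compose)
  moreover have "\<forall>\<^sub>F k in sequentially. f (s (t k)) = s (j (t k))"
    using eventually_compose_filterlim[OF assms(5) t(1)] .
  ultimately have "(\<lambda>k. s (j (t k))) \<longlonglongrightarrow> f z"
    by (rule Lim_transform_eventually)
  moreover have "filterlim (\<lambda>k. j (t k)) at_top sequentially"
    using filterlim_compose[OF assms(4) t(1)] .
  ultimately show ?thesis
    unfolding mem_limit_set_iff_tendsto by blast
qed

lemma mem_image_limit_set:
  assumes "continuous_on U f" "open U" "compact C" "C \<subseteq> U" "range s \<subseteq> C"
    and "filterlim j at_top sequentially" "\<forall>\<^sub>F i in sequentially. f (s (j i)) = s i"
    and "z \<in> limit_set s"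
  shows "z \<in> f ` limit_set s"
proof -
  obtain t where t: "filterlim t at_top sequentially" "(\<lambda>k. s (t k)) \<longlonglongrightarrow> z"
    using assms(8) unfolding mem_limit_set_iff_tendsto by blast
  obtain w r where w: "w \<in> C" "strict_mono r" "((\<lambda>k. s (j (t k))) \<circ> r) \<longlonglongrightarrow> w"
    using seq_compactE[OF compact_imp_seq_compact[OF assms(3)], of "\<lambda>k. s (j (t k))"]
      assms(5) by blast
  have "filterlim (\<lambda>k. t (r k)) at_top sequentially"
    using filterlim_compose[OF t(1) filterlim_subseq[OF w(2)]] .
  then have "w \<in> limit_set s"
    using w(3) filterlim_compose[OF assms(6)] unfolding mem_limit_set_iff_tendsto comp_def by blast
  have "isCont f w"
    using assms(1-4) w(1) by (simp add: continuous_on_eq_continuous_at subset_iff)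
  then have "(\<lambda>k. f (s (j (t (r k))))) \<longlonglongrightarrow> f w"
    using w(3) unfolding comp_def by (rule isCont_tendsto_compose)
  moreover have "(\<lambda>k. f (s (j (t (r k))))) \<longlonglongrightarrow> z"
  proof (rule Lim_transform_eventually)
    show "(\<lambda>k. s (t (r k))) \<longlonglongrightarrow> z"
      using LIMSEQ_subseq_LIMSEQ[OF t(2) w(2)] unfolding comp_def .
    show "\<forall>\<^sub>F k in sequentially. s (t (r k)) = f (s (j (t (r k))))"
      using eventually_compose_filterlim[OF assms(7) \<open>filterlim (\<lambda>k. t (r k)) at_top sequentially\<close>]
      by (simp add: eq_commute)
  qed
  ultimately have "f w = z"
    by (rule LIMSEQ_unique)
  with \<open>w \<in> limit_set s\<close> show ?thesis by blast
qed

section \<open>Solutions and maximal invariant sets\<close>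

lemma is_solution_funpow:
  assumes "is_solution U f \<sigma> x"
  shows "\<sigma> (i + int n) = (f ^^ n) (\<sigma> i)"
proof (induction n)
  case 0
  show ?case by simp
next
  case (Suc n)
  have "\<sigma> (i + int (Suc n)) = \<sigma> (i + int n + 1)"
    by (simp add: ac_simps)
  also have "\<dots> = f (\<sigma> (i + int n))"
    using assms unfolding is_solution_def by simp
  finally show ?case
    using Suc by simp
qed

lemma is_solution_shift:
  assumes "is_solution U f \<sigma> x"
  shows "is_solution U f (\<lambda>j. \<sigma> (j + k)) (\<sigma> k)"
  using assms unfolding is_solution_def by (metis add.commute add.left_commute add_0)

lemma Inv_subset: "Inv U f D \<subseteq> D"
  unfolding Inv_def by blast

lemma Inv_mono: "D \<subseteq> E \<Longrightarrow> Inv U f D \<subseteq> Inv U f E"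
  unfolding Inv_def by blast

lemma solution_in_Inv:
  assumes "is_solution U f \<sigma> x" "range \<sigma> \<subseteq> D"
  shows "\<sigma> k \<in> Inv U f D"
  using is_solution_shift[OF assms(1)] assms(2) unfolding Inv_def by blast

lemma Inv_obtain_solution:
  assumes "z \<in> Inv U f D"
  obtains \<sigma> where "is_solution U f \<sigma> z" "range \<sigma> \<subseteq> Inv U f D"
proof -
  obtain \<sigma> where \<sigma>: "is_solution U f \<sigma> z" "range \<sigma> \<subseteq> D"
    using assms unfolding Inv_def by blast
  then have "range \<sigma> \<subseteq> Inv U f D"
    using solution_in_Inv[OF \<sigma>] by auto
  with \<sigma>(1) show ?thesis
    by (rule that)
qed

lemma Inv_funpow:
  assumes "z \<in> Inv U f D"
  shows "(f ^^ n) z \<in> Inv U f D"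
proof -
  obtain \<sigma> where \<sigma>: "is_solution U f \<sigma> z" "range \<sigma> \<subseteq> D"
    using assms unfolding Inv_def by blast
  then have "(f ^^ n) z = \<sigma> (0 + int n)"
    using is_solution_funpow[OF \<sigma>(1), of 0 n] unfolding is_solution_def by simp
  then show ?thesis
    using solution_in_Inv[OF \<sigma>] by simp
qed

lemma Inv_eq_if_image_eq:
  assumes "L \<subseteq> U" "f ` L = L"
  shows "Inv U f L = L"
proof
  show "L \<subseteq> Inv U f L"
  proof
    fix z
    assume "z \<in> L"
    have "\<forall>y\<in>L. \<exists>w. w \<in> L \<and> f w = y"
    proof
      fix y
      assume "y \<in> L"
      with assms(2) have "y \<in> f ` L"
        by simp
      then show "\<exists>w. w \<in> L \<and> f w = y"
        by blast
    qed
    then have "\<exists>g. \<forall>y\<in>L. g y \<in> L \<and> f (g y) = y"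
      by (rule bchoice)
    then obtain g where g: "\<forall>y\<in>L. g y \<in> L \<and> f (g y) = y"
      by blast
    define \<sigma> where "\<sigma> k = (if k \<ge> 0 then (f ^^ nat k) z else (g ^^ nat (- k)) z)" for k
    have "(f ^^ n) z \<in> L" for n
      by (induction n) (use \<open>z \<in> L\<close> assms(2) in force)+
    moreover have "(g ^^ n) z \<in> L" for n
      by (induction n) (use \<open>z \<in> L\<close> g in simp_all)
    ultimately have in_L: "range \<sigma> \<subseteq> L"
      unfolding \<sigma>_def by auto
    have "f (\<sigma> k) = \<sigma> (k + 1)" for k
    proof (cases "k \<ge> 0")
      case True
      then have "nat (k + 1) = Suc (nat k)"
        by simp
      with True show ?thesis
        unfolding \<sigma>_def by simp
    next
      case False
      then have "\<sigma> (k + 1) = (g ^^ nat (- (k + 1))) z"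
        unfolding \<sigma>_def by auto
      moreover have "nat (- k) = Suc (nat (- (k + 1)))"
        using False by simp
      ultimately have "\<sigma> k = g (\<sigma> (k + 1))"
        using False unfolding \<sigma>_def by simp
      then show ?thesis
        using g in_L by auto
    qed
    moreover have "\<sigma> 0 = z"
      by (simp add: \<sigma>_def)
    ultimately have "is_solution U f \<sigma> z"
      unfolding is_solution_def using in_L assms(1) by blast
    with in_L \<open>z \<in> L\<close> show "z \<in> Inv U f L"
      unfolding Inv_def by blast
  qed
qed (rule Inv_subset)

section \<open>Invariance of limit sets\<close>

lemma limit_set_subset_Inv:
  assumes "open U" "continuous_on U f" "compact C" "C \<subseteq> U" "range s \<subseteq> C"
    and "filterlim j at_top sequentially" "\<forall>\<^sub>F i in sequentially. f (s i) = s (j i)"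
    and "filterlim j' at_top sequentially" "\<forall>\<^sub>F i in sequentially. f (s (j' i)) = s i"
  shows "limit_set s \<subseteq> Inv U f C"
proof -
  have "limit_set s \<subseteq> C"
    by (rule limit_set_subset_closed[OF compact_imp_closed[OF assms(3)] assms(5)])
  then have "limit_set s \<subseteq> U"
    using assms(4) by (rule order_trans)
  have "f ` limit_set s \<subseteq> limit_set s"
    using image_mem_limit_set[OF assms(2,1) \<open>limit_set s \<subseteq> U\<close> assms(6,7)] by (rule image_subsetI)
  moreover have "limit_set s \<subseteq> f ` limit_set s"
    using mem_image_limit_set[OF assms(2,1,3,4,5,8,9)] by (rule subsetI)
  ultimately have "Inv U f (limit_set s) = limit_set s"
    by (intro Inv_eq_if_image_eq \<open>limit_set s \<subseteq> U\<close> subset_antisym)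
  then show ?thesis
    using Inv_mono[OF \<open>limit_set s \<subseteq> C\<close>, of U f] by simp
qed

lemma omega_limit_subset_Inv:
  assumes "open U" "continuous_on U f" "compact C" "C \<subseteq> U" "\<And>n. (f ^^ n) x \<in> C"
  shows "omega_limit f x \<noteq> {}" "omega_limit f x \<subseteq> Inv U f C"
proof -
  have in_C: "range (\<lambda>n. (f ^^ n) x) \<subseteq> C"
    using assms(5) by blast
  have forward: "\<forall>\<^sub>F i in sequentially. f ((f ^^ i) x) = (f ^^ Suc i) x"
    by simp
  have backward: "\<forall>\<^sub>F i in sequentially. f ((f ^^ (i - 1)) x) = (f ^^ i) x"
    using eventually_gt_at_top[of 0] by eventually_elim (auto simp: gr0_conv_Suc)
  show "omega_limit f x \<noteq> {}"
    unfolding omega_limit_eq_limit_set by (rule limit_set_nonempty[OF assms(3) in_C])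
  show "omega_limit f x \<subseteq> Inv U f C"
    unfolding omega_limit_eq_limit_set
    by (rule limit_set_subset_Inv[OF assms(1-4) in_C filterlim_Suc forward
          filterlim_minus_const_nat_at_top backward])
qed

lemma alpha_limit_subset_Inv:
  assumes "open U" "continuous_on U f" "compact C" "C \<subseteq> U"
    and "is_solution U f \<sigma> x" "\<And>n. \<sigma> (- int n) \<in> C"
  shows "alpha_limit \<sigma> \<noteq> {}" "alpha_limit \<sigma> \<subseteq> Inv U f C"
proof -
  have in_C: "range (\<lambda>n. \<sigma> (- int n)) \<subseteq> C"
    using assms(6) by blast
  have step: "f (\<sigma> (- int (Suc n))) = \<sigma> (- int n)" for n
  proof -
    have "f (\<sigma> (- int (Suc n))) = \<sigma> (- int (Suc n) + 1)"
      using assms(5) unfolding is_solution_def by blast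
    then show ?thesis
      by simp
  qed
  have forward: "\<forall>\<^sub>F i in sequentially. f (\<sigma> (- int i)) = \<sigma> (- int (i - 1))"
    using eventually_gt_at_top[of 0] by eventually_elim (auto simp: gr0_conv_Suc step[simplified])
  have backward: "\<forall>\<^sub>F i in sequentially. f (\<sigma> (- int (Suc i))) = \<sigma> (- int i)"
    using step by simp
  show "alpha_limit \<sigma> \<noteq> {}"
    unfolding alpha_limit_eq_limit_set by (rule limit_set_nonempty[OF assms(3) in_C])
  show "alpha_limit \<sigma> \<subseteq> Inv U f C"
    unfolding alpha_limit_eq_limit_set
    by (rule limit_set_subset_Inv[OF assms(1-4) in_C filterlim_minus_const_nat_at_top forward
          filterlim_Suc backward])
qed

lemma omega_limit_funpow: "omega_limit f ((f ^^ j) y) = omega_limit f y"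
  using limit_set_shift[of "\<lambda>n. (f ^^ n) y" j]
  unfolding omega_limit_eq_limit_set by (simp add: funpow_add)

lemma omega_limit_solution:
  assumes "is_solution U f \<sigma> x"
  shows "omega_limit f (\<sigma> k) = omega_limit f (\<sigma> 0)"
proof (cases "k \<ge> 0")
  case True
  then have "\<sigma> k = (f ^^ nat k) (\<sigma> 0)"
    using is_solution_funpow[OF assms, of 0 "nat k"] by simp
  then show ?thesis
    by (simp add: omega_limit_funpow)
next
  case False
  then have "\<sigma> 0 = (f ^^ nat (- k)) (\<sigma> k)"
    using is_solution_funpow[OF assms, of k "nat (- k)"] by simp
  then show ?thesis
    by (simp add: omega_limit_funpow)
qed

lemma alpha_limit_shift: "alpha_limit (\<lambda>j. \<sigma> (j + k)) = alpha_limit \<sigma>"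
proof (cases "k \<ge> 0")
  case True
  then have "(\<lambda>n. \<sigma> (- int (n + nat k) + k)) = (\<lambda>n. \<sigma> (- int n))"
    by auto
  then show ?thesis
    using limit_set_shift[of "\<lambda>n. \<sigma> (- int n + k)" "nat k"]
    unfolding alpha_limit_eq_limit_set by simp
next
  case False
  then have "(\<lambda>n. \<sigma> (- int n + k)) = (\<lambda>n. \<sigma> (- int (n + nat (- k))))"
    by auto
  then show ?thesis
    using limit_set_shift[of "\<lambda>n. \<sigma> (- int n)" "nat (- k)"]
    unfolding alpha_limit_eq_limit_set by simp
qed

lemma omega_limit_isolated_invariant:
  assumes "open U" "continuous_on U f" "isolated_invariant U f T" "z \<in> T"
  shows "omega_limit f z \<noteq> {}" "omega_limit f z \<subseteq> T"
proof -
  obtain D where D: "compact D" "D \<subseteq> U" "T = Inv U f D"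
    using assms(3) unfolding isolated_invariant_def isolating_nbhd_def by blast
  have "(f ^^ n) z \<in> D" for n
    using Inv_funpow[of z U f D n] Inv_subset assms(4) unfolding D(3) by fast
  then show "omega_limit f z \<noteq> {}" "omega_limit f z \<subseteq> T"
    unfolding D(3) by (fact omega_limit_subset_Inv[OF assms(1,2) D(1,2)])+
qed

section \<open>Filtration pairs\<close>

lemma compact_closure_subset:
  fixes A N :: "'a::t2_space set"
  assumes "compact N" "A \<subseteq> N"
  shows "closure A \<subseteq> N" "compact (closure A)"
proof -
  show "closure A \<subseteq> N"
    by (rule closure_minimal[OF assms(2) compact_imp_closed[OF assms(1)]])
  then show "compact (closure A)"
    using compact_Int_closed[OF assms(1), of "closure A"] by (simp add: Int_absorb1)
qed

lemma filtration_pairD: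
  assumes "filtration_pair U f T N L"
  shows "compact N" "compact L" "L \<subseteq> N" "N \<subseteq> interior U"
    and "closure (interior L) = L" "closure (interior N) = N"
    and "isolating_nbhd U f (closure (N - L))" "Inv U f (closure (N - L)) = T"
    and "\<exists>V. open V \<and> exit_set f N \<subseteq> V \<and> V \<inter> N \<subseteq> L"
    and "f ` L \<inter> closure (N - L) = {}"
  using assms unfolding filtration_pair_def by simp_all

lemma filtration_pair_image_interior:
  assumes "filtration_pair U f T N L" "x \<in> N" "x \<notin> L"
  shows "f x \<in> interior N"
proof (rule ccontr)
  assume "f x \<notin> interior N"
  with assms(2) have "x \<in> exit_set f N"
    unfolding exit_set_def by blast
  moreover obtain V where "exit_set f N \<subseteq> V" "V \<inter> N \<subseteq> L"
    using filtration_pairD(9)[OF assms(1)] by blast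
  ultimately show False
    using assms(2,3) by blast
qed

lemma filtration_pair_image_L:
  assumes "filtration_pair U f T N L" "x \<in> L"
  shows "f x \<notin> closure (N - L)"
  using filtration_pairD(10)[OF assms(1)] assms(2) by blast

lemma filtration_pair_invariant_subset:
  assumes "filtration_pair U f T N L"
  shows "T \<subseteq> N - L"
proof
  fix x
  assume "x \<in> T"
  then have x: "x \<in> Inv U f (closure (N - L))"
    using filtration_pairD(8)[OF assms] by simp
  have "closure (N - L) \<subseteq> N"
    using compact_closure_subset(1)[OF filtration_pairD(1)[OF assms]] by blast
  have "f x \<in> closure (N - L)"
    using Inv_funpow[OF x, of 1] Inv_subset[of U f "closure (N - L)"] by auto
  then have "x \<notin> L"
    using filtration_pair_image_L[OF assms] by blast
  moreover have "x \<in> N"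
    using x Inv_subset[of U f "closure (N - L)"] \<open>closure (N - L) \<subseteq> N\<close> by blast
  ultimately show "x \<in> N - L"
    by blast
qed

text \<open>A forward orbit in \<open>N\<close> that never enters \<open>L\<close> stays in \<open>N - L\<close>, because no point of
  \<open>N - L\<close> is an exit point of \<open>N\<close>.\<close>

lemma filtration_pair_omega_limit:
  assumes "open U" "continuous_on U f" "filtration_pair U f T N L"
    and "y \<in> N" "\<And>n. (f ^^ n) y \<notin> L"
  shows "omega_limit f y \<noteq> {}" "omega_limit f y \<subseteq> T"
proof -
  have orbit: "(f ^^ n) y \<in> N - L" for n
  proof (induction n)
    case 0
    show ?case
      using assms(4) assms(5)[of 0] by simp
  next
    case (Suc n)
    then have "(f ^^ Suc n) y \<in> interior N"
      using filtration_pair_image_interior[OF assms(3)] by simp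
    then show ?case
      using assms(5) interior_subset by blast
  qed
  have C: "compact (closure (N - L))" "closure (N - L) \<subseteq> U"
    using filtration_pairD(7)[OF assms(3)] unfolding isolating_nbhd_def by simp_all
  have T: "Inv U f (closure (N - L)) = T"
    using filtration_pairD(8)[OF assms(3)] .
  have "(f ^^ n) y \<in> closure (N - L)" for n
    using orbit closure_subset by blast
  from omega_limit_subset_Inv[OF assms(1,2) C this] T
  show "omega_limit f y \<noteq> {}" "omega_limit f y \<subseteq> T"
    by simp_all
qed

lemma filtration_pair_nested_image_disjoint:
  assumes "filtration_pair U f T\<^sub>1 N\<^sub>1 L" "filtration_pair U f T\<^sub>2 N\<^sub>2 L" "L \<subseteq> N\<^sub>2"
  shows "f ` N\<^sub>2 \<inter> closure (N\<^sub>1 - N\<^sub>2) = {}"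
proof -
  have "f x \<notin> closure (N\<^sub>1 - N\<^sub>2)" if "x \<in> N\<^sub>2" for x
  proof (cases "x \<in> L")
    case True
    then have "f x \<notin> closure (N\<^sub>1 - L)"
      by (rule filtration_pair_image_L[OF assms(1)])
    moreover have "closure (N\<^sub>1 - N\<^sub>2) \<subseteq> closure (N\<^sub>1 - L)"
      using assms(3) by (intro closure_mono) blast
    ultimately show ?thesis
      by blast
  next
    case False
    then have "f x \<in> interior N\<^sub>2"
      by (rule filtration_pair_image_interior[OF assms(2) that])
    moreover have "interior N\<^sub>2 \<inter> closure (N\<^sub>1 - N\<^sub>2) = {}"
      using open_Int_closure_eq_empty[OF open_interior, of N\<^sub>2 "N\<^sub>1 - N\<^sub>2"]
        interior_subset[of N\<^sub>2] by blast
    ultimately show ?thesis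
      by blast
  qed
  then show ?thesis
    by blast
qed

lemma filtration_pair_nested_Inv_subset:
  assumes "filtration_pair U f T\<^sub>1 N\<^sub>1 L" "filtration_pair U f T\<^sub>2 N\<^sub>2 L" "L \<subseteq> N\<^sub>2"
  shows "Inv U f (closure (N\<^sub>1 - N\<^sub>2)) \<subseteq> T\<^sub>1 - N\<^sub>2"
proof
  fix x
  assume x: "x \<in> Inv U f (closure (N\<^sub>1 - N\<^sub>2))"
  have "closure (N\<^sub>1 - N\<^sub>2) \<subseteq> closure (N\<^sub>1 - L)"
    using assms(3) by (intro closure_mono) blast
  then have "x \<in> Inv U f (closure (N\<^sub>1 - L))"
    using Inv_mono[of "closure (N\<^sub>1 - N\<^sub>2)" "closure (N\<^sub>1 - L)" U f] x by blast
  then have "x \<in> T\<^sub>1"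
    using filtration_pairD(8)[OF assms(1)] by simp
  have "(f ^^ 1) x \<in> closure (N\<^sub>1 - N\<^sub>2)"
    using Inv_funpow[OF x, of 1] Inv_subset[of U f "closure (N\<^sub>1 - N\<^sub>2)"] by blast
  then have "x \<notin> N\<^sub>2"
    using filtration_pair_nested_image_disjoint[OF assms] by auto
  with \<open>x \<in> T\<^sub>1\<close> show "x \<in> T\<^sub>1 - N\<^sub>2"
    by blast
qed

lemma filtration_pair_nested:
  assumes "filtration_pair U f T\<^sub>1 N\<^sub>1 L" "filtration_pair U f T\<^sub>2 N\<^sub>2 L" "L \<subseteq> N\<^sub>2" "N\<^sub>2 \<subseteq> N\<^sub>1"
    and "Inv U f (closure (N\<^sub>1 - N\<^sub>2)) = T"
  shows "filtration_pair U f T N\<^sub>1 N\<^sub>2"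
proof -
  let ?K = "closure (N\<^sub>1 - N\<^sub>2)"
  note N\<^sub>1 = filtration_pairD(1,4,6)[OF assms(1)]
    and iso\<^sub>1 = filtration_pairD(7,8)[OF assms(1)]
    and exit\<^sub>1 = filtration_pairD(9)[OF assms(1)]
    and N\<^sub>2 = filtration_pairD(1,6)[OF assms(2)]
  have "?K \<subseteq> N\<^sub>1" "compact ?K"
    using compact_closure_subset[OF N\<^sub>1(1), of "N\<^sub>1 - N\<^sub>2"] by blast+
  have "?K \<subseteq> U"
    using \<open>?K \<subseteq> N\<^sub>1\<close> N\<^sub>1(2) interior_subset by blast
  have "closure (N\<^sub>1 - L) \<subseteq> N\<^sub>1"
    using compact_closure_subset(1)[OF N\<^sub>1(1), of "N\<^sub>1 - L"] by blast
  have "Inv U f ?K \<subseteq> interior (closure (N\<^sub>1 - L)) - N\<^sub>2"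
    using filtration_pair_nested_Inv_subset[OF assms(1-3)] iso\<^sub>1
    unfolding isolating_nbhd_def by blast
  also have "\<dots> \<subseteq> interior ?K"
  proof (rule interior_maximal)
    show "interior (closure (N\<^sub>1 - L)) - N\<^sub>2 \<subseteq> ?K"
      using interior_subset \<open>closure (N\<^sub>1 - L) \<subseteq> N\<^sub>1\<close> closure_subset by blast
    show "open (interior (closure (N\<^sub>1 - L)) - N\<^sub>2)"
      using N\<^sub>2(1) by (simp add: open_Diff compact_imp_closed)
  qed
  finally have "isolating_nbhd U f ?K"
    unfolding isolating_nbhd_def using \<open>compact ?K\<close> \<open>?K \<subseteq> U\<close> by blast
  moreover have "\<exists>V. open V \<and> exit_set f N\<^sub>1 \<subseteq> V \<and> V \<inter> N\<^sub>1 \<subseteq> N\<^sub>2"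
    using exit\<^sub>1 assms(3) by blast
  moreover have "f ` N\<^sub>2 \<inter> ?K = {}"
    by (rule filtration_pair_nested_image_disjoint[OF assms(1-3)])
  ultimately show ?thesis
    unfolding filtration_pair_def using N\<^sub>1 N\<^sub>2 assms(4,5) by blast
qed


section \<open>Morse decompositions and Morse set filtrations\<close>

lemma attracting_interval_empty: "attracting_interval P lt {}"
  by (simp add: attracting_interval_def)

lemma morse_set_mono: "L \<subseteq> L' \<Longrightarrow> morse_set U f S M L \<subseteq> morse_set U f S M L'"
  unfolding morse_set_def by blast

lemma component_subset_morse_set: "p \<in> L \<Longrightarrow> M p \<subseteq> morse_set U f S M L"
  unfolding morse_set_def by blast

locale morse_setting =
  fixes U :: "'a::metric_space set" and f :: "'a \<Rightarrow> 'a" and S :: "'a set"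
    and P :: "'p set" and lt :: "'p \<Rightarrow> 'p \<Rightarrow> bool" and M :: "'p \<Rightarrow> 'a set"
  assumes open_domain: "open U"
    and continuous_map: "continuous_on U f"
    and morse: "morse_decomposition U f S P lt M"
begin

lemma component_subset: "p \<in> P \<Longrightarrow> M p \<subseteq> S"
  using morse unfolding morse_decomposition_def by blast

lemma isolated_invariant_component: "p \<in> P \<Longrightarrow> isolated_invariant U f (M p)"
  using morse unfolding morse_decomposition_def by blast

lemma components_disjoint: "p \<in> P \<Longrightarrow> q \<in> P \<Longrightarrow> p \<noteq> q \<Longrightarrow> M p \<inter> M q = {}"
  using morse unfolding morse_decomposition_def by blast

lemma solution_cases:
  assumes "is_solution U f \<sigma> x" "range \<sigma> \<subseteq> S"
  obtains p where "p \<in> P" "range \<sigma> \<subseteq> M p"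
    | p q where "p \<in> P" "q \<in> P" "omega_limit f x \<subseteq> M p" "alpha_limit \<sigma> \<subseteq> M q"
proof -
  have "\<sigma> 0 = x"
    using assms(1) unfolding is_solution_def by simp
  then have "x \<in> S"
    using assms(2) by blast
  with assms \<open>\<sigma> 0 = x\<close> show ?thesis
    using morse that unfolding morse_decomposition_def by metis
qed

lemma omega_limit_component:
  assumes "p \<in> P" "z \<in> M p"
  shows "omega_limit f z \<noteq> {}" "omega_limit f z \<subseteq> M p"
  using omega_limit_isolated_invariant[OF open_domain continuous_map
      isolated_invariant_component[OF assms(1)] assms(2)] by simp_all

lemma morse_set_subset: "L \<subseteq> P \<Longrightarrow> morse_set U f S M L \<subseteq> S"
  using component_subset unfolding morse_set_def connecting_def by fast

text \<open>Besides disjointness of the Morse sets, this uses that a point of \<open>M p\<close> has a nonempty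
  \<open>\<omega>\<close>-limit set inside \<open>M p\<close>, so it lies on no connecting orbit ending in another Morse set.\<close>

lemma index_mem_if_in_morse_set:
  assumes "L \<subseteq> P" "p \<in> P" "z \<in> M p" "z \<in> morse_set U f S M L"
  shows "p \<in> L"
proof -
  from assms(4) consider q where "q \<in> L" "z \<in> M q"
    | q r where "q \<in> L" "r \<in> L" "z \<in> connecting U f (M q) (M r) S"
    unfolding morse_set_def by blast
  then show ?thesis
  proof cases
    case (1 q)
    then show ?thesis
      using components_disjoint[of p q] assms(1-3) by blast
  next
    case (2 q r)
    then have "omega_limit f z \<subseteq> M r"
      unfolding connecting_def by blast
    moreover obtain w where "w \<in> omega_limit f z"
      using omega_limit_component(1)[OF assms(2,3)] by blast
    ultimately have "M p \<inter> M r \<noteq> {}"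
      using omega_limit_component(2)[OF assms(2,3)] by blast
    then show ?thesis
      using components_disjoint[of p r] 2 assms(1,2) by blast
  qed
qed

lemma morse_set_solution:
  assumes "L \<subseteq> P" "x \<in> morse_set U f S M L"
  obtains \<sigma> r where "is_solution U f \<sigma> x" "range \<sigma> \<subseteq> morse_set U f S M L" "r \<in> L"
    "\<And>k. omega_limit f (\<sigma> k) \<subseteq> M r"
proof -
  from assms(2) consider (component) p where "p \<in> L" "x \<in> M p"
    | (connecting) q r where "q \<in> L" "r \<in> L" "x \<in> connecting U f (M q) (M r) S"
    unfolding morse_set_def by blast
  then show ?thesis
  proof cases
    case component
    then have "p \<in> P"
      using assms(1) by blast
    then obtain D where "M p = Inv U f D"
      using isolated_invariant_component unfolding isolated_invariant_def by blast
    then obtain \<sigma> where \<sigma>: "is_solution U f \<sigma> x" "range \<sigma> \<subseteq> M p"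
      using Inv_obtain_solution[of x U f D] component(2) by auto
    have "range \<sigma> \<subseteq> morse_set U f S M L"
      using \<sigma>(2) component_subset_morse_set[OF component(1)] by blast
    moreover have "omega_limit f (\<sigma> k) \<subseteq> M p" for k
      using omega_limit_component(2)[OF \<open>p \<in> P\<close>, of "\<sigma> k"] \<sigma>(2) by blast
    ultimately show ?thesis
      using that \<sigma>(1) component(1) by blast
  next
    case connecting
    then obtain \<sigma> where \<sigma>: "is_solution U f \<sigma> x" "range \<sigma> \<subseteq> S"
      "alpha_limit \<sigma> \<subseteq> M q" "omega_limit f x \<subseteq> M r"
      unfolding connecting_def by blast
    have "\<sigma> 0 = x"
      using \<sigma>(1) unfolding is_solution_def by simp
    then have \<omega>: "omega_limit f (\<sigma> k) \<subseteq> M r" for k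
      using omega_limit_solution[OF \<sigma>(1), of k] \<sigma>(4) by simp
    have "\<sigma> k \<in> morse_set U f S M L" for k
    proof (cases "\<sigma> k \<in> M q \<union> M r")
      case True
      then show ?thesis
        using component_subset_morse_set[of q L] component_subset_morse_set[of r L] connecting(1,2)
        by blast
    next
      case False
      have "is_solution U f (\<lambda>j. \<sigma> (j + k)) (\<sigma> k)" "range (\<lambda>j. \<sigma> (j + k)) \<subseteq> S"
        "alpha_limit (\<lambda>j. \<sigma> (j + k)) \<subseteq> M q"
        using is_solution_shift[OF \<sigma>(1)] \<sigma>(2,3) alpha_limit_shift[of \<sigma> k] by auto
      then have "\<sigma> k \<in> connecting U f (M q) (M r) S"
        unfolding connecting_def using False \<omega>[of k] \<sigma>(2) by blast
      then show ?thesis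
        unfolding morse_set_def using connecting(1,2) by blast
    qed
    then show ?thesis
      using that[OF \<sigma>(1) _ connecting(2) \<omega>] by blast
  qed
qed

lemma Inv_subset_morse_set:
  assumes "compact D" "D \<subseteq> U" "Inv U f D \<subseteq> S"
    and index: "\<And>p z. p \<in> P \<Longrightarrow> z \<in> M p \<Longrightarrow> z \<in> Inv U f D \<Longrightarrow> p \<in> L"
  shows "Inv U f D \<subseteq> morse_set U f S M L"
proof
  fix x
  assume x: "x \<in> Inv U f D"
  then obtain \<sigma> where \<sigma>: "is_solution U f \<sigma> x" "range \<sigma> \<subseteq> Inv U f D"
    by (rule Inv_obtain_solution)
  have "\<sigma> 0 = x"
    using \<sigma>(1) unfolding is_solution_def by simp
  have in_D: "\<sigma> n \<in> D" for n
    using \<sigma>(2) Inv_subset[of U f D] by blast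
  have "range \<sigma> \<subseteq> S"
    using \<sigma>(2) assms(3) by blast
  from solution_cases[OF \<sigma>(1) this] show "x \<in> morse_set U f S M L"
  proof cases
    case (1 p)
    then have "x \<in> M p"
      using \<open>\<sigma> 0 = x\<close> by blast
    then show ?thesis
      using index[OF 1(1) _ x] component_subset_morse_set[of p L] by blast
  next
    case (2 p q)
    have "(f ^^ n) x \<in> D" for n
      using is_solution_funpow[OF \<sigma>(1), of 0 n] in_D[of "int n"] \<open>\<sigma> 0 = x\<close> by simp
    then obtain z where "z \<in> omega_limit f x" "z \<in> Inv U f D"
      using omega_limit_subset_Inv[OF open_domain continuous_map assms(1,2)] by blast
    then have "p \<in> L"
      using index[OF 2(1)] 2(3) by blast
    obtain w where "w \<in> alpha_limit \<sigma>" "w \<in> Inv U f D"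
      using alpha_limit_subset_Inv[OF open_domain continuous_map assms(1,2) \<sigma>(1) in_D] by blast
    then have "q \<in> L"
      using index[OF 2(2)] 2(4) by blast
    show ?thesis
    proof (cases "x \<in> M p \<union> M q")
      case True
      then show ?thesis
        using component_subset_morse_set[of p L] component_subset_morse_set[of q L]
          \<open>p \<in> L\<close> \<open>q \<in> L\<close> by blast
    next
      case False
      have "x \<in> S"
        using \<open>range \<sigma> \<subseteq> S\<close> \<open>\<sigma> 0 = x\<close> by blast
      with False have "x \<in> connecting U f (M q) (M p) S"
        unfolding connecting_def using \<sigma>(1) \<open>range \<sigma> \<subseteq> S\<close> 2(3,4) by blast
      then show ?thesis
        unfolding morse_set_def using \<open>p \<in> L\<close> \<open>q \<in> L\<close> by blast
    qed
  qed
qed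

end

locale morse_filtration_setting = morse_setting +
  fixes N :: "'p set \<Rightarrow> 'a::metric_space set"
  assumes filtration: "morse_set_filtration U f S P lt M N"
begin

lemma filtration_pair_morse_set:
  "attracting_interval P lt I \<Longrightarrow> filtration_pair U f (morse_set U f S M I) (N I) (N {})"
  using filtration unfolding morse_set_filtration_def by blast

lemma N_mono:
  assumes "attracting_interval P lt I" "attracting_interval P lt J" "J \<subseteq> I"
  shows "N J \<subseteq> N I"
proof -
  have "N I \<inter> N J = N (I \<inter> J)"
    using filtration assms(1,2) unfolding morse_set_filtration_def by blast
  also have "I \<inter> J = J"
    using assms(3) by blast
  finally show ?thesis
    by blast
qed

text \<open>A point of \<open>M\<^sub>I\<close> never enters \<open>N {}\<close>, so if it lay in \<open>N J\<close> its \<open>\<omega>\<close>-limit set would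
  meet \<open>M\<^sub>J\<close>.\<close>

lemma not_in_N_if_omega_limit_outside:
  assumes "attracting_interval P lt I" "attracting_interval P lt J"
    and "y \<in> morse_set U f S M I" "r \<in> P" "r \<notin> J" "omega_limit f y \<subseteq> M r"
  shows "y \<notin> N J"
proof
  assume "y \<in> N J"
  note fp\<^sub>I = filtration_pair_morse_set[OF assms(1)]
  have "(f ^^ n) y \<in> morse_set U f S M I" for n
    using Inv_funpow[of y U f "closure (N I - N {})" n] assms(3) filtration_pairD(8)[OF fp\<^sub>I]
    by simp
  then have "(f ^^ n) y \<notin> N {}" for n
    using filtration_pair_invariant_subset[OF fp\<^sub>I] by blast
  with filtration_pair_omega_limit[OF open_domain continuous_map
      filtration_pair_morse_set[OF assms(2)] \<open>y \<in> N J\<close>]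
  obtain z where "z \<in> omega_limit f y" "z \<in> morse_set U f S M J"
    by blast
  moreover have "J \<subseteq> P"
    using assms(2) unfolding attracting_interval_def by blast
  ultimately have "r \<in> J"
    using index_mem_if_in_morse_set[OF _ assms(4)] assms(6) by blast
  with assms(5) show False
    by blast
qed

lemma Inv_closure_diff_N:
  assumes "attracting_interval P lt I" "attracting_interval P lt J" "J \<subseteq> I"
  shows "Inv U f (closure (N I - N J)) = morse_set U f S M (I - J)"
proof
  let ?K = "closure (N I - N J)"
  note fp\<^sub>I = filtration_pair_morse_set[OF assms(1)]
    and fp\<^sub>J = filtration_pair_morse_set[OF assms(2)]
  have "I \<subseteq> P"
    using assms(1) unfolding attracting_interval_def by blast
  have "N {} \<subseteq> N J"
    using N_mono[OF assms(2) attracting_interval_empty] by blast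
  have Inv_K: "Inv U f ?K \<subseteq> morse_set U f S M I - N J"
    by (rule filtration_pair_nested_Inv_subset[OF fp\<^sub>I fp\<^sub>J \<open>N {} \<subseteq> N J\<close>])
  have M\<^sub>J: "morse_set U f S M J \<subseteq> N J"
    using filtration_pair_invariant_subset[OF fp\<^sub>J] by blast
  show "Inv U f ?K \<subseteq> morse_set U f S M (I - J)"
  proof (rule Inv_subset_morse_set)
    show "compact ?K" "?K \<subseteq> U"
      using compact_closure_subset[OF filtration_pairD(1)[OF fp\<^sub>I], of "N I - N J"]
        filtration_pairD(4)[OF fp\<^sub>I] interior_subset[of U] by blast+
    show "Inv U f ?K \<subseteq> S"
      using Inv_K morse_set_subset[OF \<open>I \<subseteq> P\<close>] by blast
  next
    fix p z
    assume "p \<in> P" "z \<in> M p" "z \<in> Inv U f ?K"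
    then have "z \<in> morse_set U f S M I" "z \<notin> N J"
      using Inv_K by blast+
    then have "p \<in> I"
      using index_mem_if_in_morse_set[OF \<open>I \<subseteq> P\<close> \<open>p \<in> P\<close> \<open>z \<in> M p\<close>] by blast
    moreover have "p \<notin> J"
      using component_subset_morse_set[of p J] M\<^sub>J \<open>z \<in> M p\<close> \<open>z \<notin> N J\<close> by blast
    ultimately show "p \<in> I - J"
      by blast
  qed
  show "morse_set U f S M (I - J) \<subseteq> Inv U f ?K"
  proof
    fix x
    assume "x \<in> morse_set U f S M (I - J)"
    then obtain \<sigma> r where \<sigma>: "is_solution U f \<sigma> x" "range \<sigma> \<subseteq> morse_set U f S M (I - J)"
      "r \<in> I - J" "\<And>k. omega_limit f (\<sigma> k) \<subseteq> M r"
      using morse_set_solution[of "I - J" x] \<open>I \<subseteq> P\<close> by blast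
    have "\<sigma> k \<in> ?K" for k
    proof -
      have "\<sigma> k \<in> morse_set U f S M I"
        using \<sigma>(2) morse_set_mono[of "I - J" I U f S M] by blast
      then have "\<sigma> k \<notin> N J"
        using not_in_N_if_omega_limit_outside[OF assms(1,2) _ _ _ \<sigma>(4)] \<sigma>(3) \<open>I \<subseteq> P\<close> by blast
      moreover have "\<sigma> k \<in> N I"
        using \<open>\<sigma> k \<in> morse_set U f S M I\<close> filtration_pair_invariant_subset[OF fp\<^sub>I] by blast
      ultimately show ?thesis
        using closure_subset[of "N I - N J"] by blast
    qed
    then have "\<sigma> 0 \<in> Inv U f ?K"
      using solution_in_Inv[OF \<sigma>(1)] by blast
    then show "x \<in> Inv U f ?K"
      using \<sigma>(1) unfolding is_solution_def by simp
  qed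
qed

end

theorem mainTheorem15:
  fixes U :: "'a::metric_space set" and f :: "'a \<Rightarrow> 'a" and S :: "'a set"
    and P :: "'p set" and lt :: "'p \<Rightarrow> 'p \<Rightarrow> bool" and M :: "'p \<Rightarrow> 'a set"
    and N :: "'p set \<Rightarrow> 'a set" and I J :: "'p set"
  assumes "locally compact (UNIV :: 'a set)"
    and "open U" and "continuous_on U f"
    and "isolated_invariant U f S"
    and "morse_decomposition U f S P lt M"
    and "morse_set_filtration U f S P lt M N"
    and "attracting_interval P lt I" and "attracting_interval P lt J" and "J \<subseteq> I"
  shows "filtration_pair U f (morse_set U f S M (I - J)) (N I) (N J)"
proof -
  interpret morse_filtration_setting U f S P lt M N
    using assms(2,3,5,6) by unfold_locales
  have "N {} \<subseteq> N J" "N J \<subseteq> N I"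
    using N_mono[OF assms(8) attracting_interval_empty] N_mono[OF assms(7-9)] by blast+
  then show ?thesis
    using filtration_pair_nested[OF filtration_pair_morse_set[OF assms(7)]
        filtration_pair_morse_set[OF assms(8)]] Inv_closure_diff_N[OF assms(7-9)] by blast
qed

end
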